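(* Let $n\ge 2$, $m\ge 0$, $1\le k\le n-1$. Let $(b,e)=(2k,n+k)$ or $(b,e)=(2k-1,n+k-1)$, and let $G$ be the group with presentation $$\langle \alpha,\beta\mid [(\alpha\beta^{n-k+1}\alpha\beta^{-n+k})^{e}(\alpha\beta)^{-b+1}\beta^{-n+k-1}]^{m+1}=\alpha\beta^{n-k+1}\alpha\beta^{-n+k}\rangle.$$ Let $Q$ be any quotient group of $G$ (in particular, the fundamental group of any Dehn surgery on the corresponding knot), with $\alpha,\beta$ also denoting their images in $Q$. For any homomorphism $\Phi:Q\to\mathrm{Homeo}^+(\mathbb{R})$, if $\Phi(\alpha)(t)>t$ for all $t\in\mathbb{R}$, then $\Phi(\beta)(t)\ge t$ for all $t\in\mathbb{R}$.
   Context: $\mathrm{Homeo}^+(\mathbb{R})$ is the group of order-preserving homeomorphisms of $\mathbb{R}$. For $(b,e)=(2k,n+k)$, $G$ is the knot group of the closure of $(\sigma_1\cdots\sigma_{2k})(\sigma_1\cdots\sigma_{2n})^{2n-1+m(2n+1)}$ on $2n+1$ strands; for $(b,e)=(2k-1,n+k-1)$, $G$ is the knot group of the closure of $(\sigma_1\cdots\sigma_{2k-1})(\sigma_1\cdots\sigma_{2n-1})^{2n-2+2mn}$ on $2n$ strands. *)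

theory Defs
  imports "HOL-Analysis.Analysis" "HOL-Algebra.Algebra"
begin

definition homeo_plus :: "(real \<Rightarrow> real) monoid" where
  "homeo_plus = \<lparr> carrier = {f. (\<exists>g. homeomorphism UNIV UNIV f g) \<and> strict_mono f},
                   mult = (\<lambda>f g. f \<circ> g), one = id \<rparr>"

text \<open>The defining relator of the presented group G, evaluated in a group Q.\<close>
definition knot_rel :: "('g, 'x) monoid_scheme \<Rightarrow> nat \<Rightarrow> nat \<Rightarrow> nat \<Rightarrow> nat \<Rightarrow> nat \<Rightarrow> 'g \<Rightarrow> 'g \<Rightarrow> bool" where
  "knot_rel Q n k m b e a c \<longleftrightarrow>
     (let w = a \<otimes>\<^bsub>Q\<^esub> (c [^]\<^bsub>Q\<^esub> (int n - int k + 1)) \<otimes>\<^bsub>Q\<^esub> a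
                 \<otimes>\<^bsub>Q\<^esub> (c [^]\<^bsub>Q\<^esub> (- int n + int k))
      in ((w [^]\<^bsub>Q\<^esub> e) \<otimes>\<^bsub>Q\<^esub> ((a \<otimes>\<^bsub>Q\<^esub> c) [^]\<^bsub>Q\<^esub> (- int b + 1))
            \<otimes>\<^bsub>Q\<^esub> (c [^]\<^bsub>Q\<^esub> (- int n + int k - 1))) [^]\<^bsub>Q\<^esub> (m + 1) = w)"

end

theory Submission imports Defs begin

text \<open>With p = n - k + 1, y = \<alpha>\<beta>, V = \<beta>^p y \<beta>^-p, w = \<alpha>V and Z = \<beta>^p y^(b-1) one has
  e = p + b - 1, and the relation says that w^e Z^-1 is an (m+1)-st root of w; this forces
  w^N = Z^(m+1) for N = (m+1)e - 1.  Let f, g, h be the images of \<alpha>, \<beta>, y.  Since f \<ge> id,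
  h = f g \<ge> g and the image of w = \<alpha>V dominates that of V.  The increasing map P representing
  w^N = Z^(m+1) is therefore bounded below by the image of V^N = \<beta>^p y^N \<beta>^-p, that is by
  g^p h^N g^-p, and above by (g^p h^(b-1))^(m+1) with every g except the outermost g^p replaced
  by h.  Comparing the two bounds gives P(g^(p-1) t) \<le> P(g^p t), hence s \<le> g s.\<close>

lemma (in group) pow_eq_pow_of_relation:
  assumes w: "w \<in> carrier G" and Z: "Z \<in> carrier G" and e: "1 \<le> e"
    and rel: "(w [^] (e::nat) \<otimes> inv Z) [^] Suc m = w"
  shows "w [^] (Suc m * e - 1) = Z [^] Suc m"
proof -
  \<comment> \<open>x is an (m+1)-st root of w, and comparing x with w^e = x^(N+1) gives Z = x^N.\<close>
  define x where "x = w [^] e \<otimes> inv Z"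
  define N where "N = Suc m * e - 1"
  have x: "x \<in> carrier G" using w Z by (simp add: x_def)
  have N: "Suc m * e = Suc N" using e by (simp add: N_def)
  have xw: "x [^] Suc m = w" using rel by (simp only: x_def)
  have "x \<otimes> \<one> = x \<otimes> (x [^] N \<otimes> inv Z)"
  proof -
    have "x = w [^] e \<otimes> inv Z" by (fact x_def)
    also have "\<dots> = x [^] Suc N \<otimes> inv Z" using xw x N by (metis nat_pow_pow)
    also have "\<dots> = x \<otimes> (x [^] N \<otimes> inv Z)" using x Z by (simp only: nat_pow_Suc2[OF x]) (simp add: m_assoc)
    finally show ?thesis using x by simp
  qed
  then have "x [^] N \<otimes> inv Z = \<one>" using x Z by (metis l_cancel one_closed nat_pow_closed m_closed inv_closed)
  then have Zx: "Z = x [^] N" using x Z by (metis inv_equality inv_inv nat_pow_closed inv_closed)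
  have "w [^] N = x [^] (Suc m * N)" using xw x by (metis nat_pow_pow)
  also have "\<dots> = Z [^] Suc m" using Zx x by (metis nat_pow_pow mult.commute)
  finally show ?thesis by (simp add: N_def)
qed

lemma (in group) conj_nat_pow_mult:
  assumes "c \<in> carrier G" "y \<in> carrier G"
  shows "(c \<otimes> y \<otimes> inv c) [^] (j::nat) \<otimes> c = c \<otimes> y [^] j"
proof (induction j)
  case 0
  show ?case using assms by simp
next
  case (Suc j)
  have "(c \<otimes> y \<otimes> inv c) [^] Suc j \<otimes> c = ((c \<otimes> y \<otimes> inv c) [^] j \<otimes> c) \<otimes> y"
    using assms by (simp add: m_assoc)
  also have "\<dots> = c \<otimes> y [^] Suc j" using Suc assms by (simp add: m_assoc)
  finally show ?case .
qed

lemma (in group) knot_rel_conv: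
  assumes a: "a \<in> carrier G" and c: "c \<in> carrier G" and "k \<le> n" and "1 \<le> b"
  defines "p \<equiv> n + 1 - k"
  shows "knot_rel G n k m b e a c \<longleftrightarrow>
    ((a \<otimes> (c [^] p \<otimes> (a \<otimes> c) \<otimes> inv (c [^] p))) [^] e \<otimes> inv (c [^] p \<otimes> (a \<otimes> c) [^] (b - 1)))
      [^] Suc m = a \<otimes> (c [^] p \<otimes> (a \<otimes> c) \<otimes> inv (c [^] p))"
proof -
  have exps: "- int n + int k - 1 = - int p" "int n - int k + 1 = int p"
    "- int n + int k = 1 + - int p" "- int b + 1 = - int (b - 1)"
    using assms(3,4) by (auto simp: p_def)
  have cp: "c [^] (1 + - int p) = c \<otimes> inv (c [^] p)"
    using c by (simp only: int_pow_mult int_pow_neg_int int_pow_1)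
  have w: "a \<otimes> c [^] int p \<otimes> a \<otimes> c [^] (1 + - int p) = a \<otimes> (c [^] p \<otimes> (a \<otimes> c) \<otimes> inv (c [^] p))"
    unfolding cp int_pow_int using a c by (simp add: m_assoc)
  have Z: "x \<otimes> (a \<otimes> c) [^] (- int (b - 1)) \<otimes> c [^] (- int p)
            = x \<otimes> inv (c [^] p \<otimes> (a \<otimes> c) [^] (b - 1))" if "x \<in> carrier G" for x
    using a c that by (simp add: m_assoc int_pow_neg_int inv_mult_group)
  show ?thesis
    unfolding knot_rel_def Let_def exps(1) unfolding exps(2-) w Suc_eq_plus1
    by (subst Z) (use a c in simp_all)
qed

lemma funpow_le_funpow:
  fixes p q :: "'a::order \<Rightarrow> 'a"
  assumes "\<forall>x. p x \<le> q x" "mono q"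
  shows "(p ^^ j) x \<le> (q ^^ j) x"
proof (induction j arbitrary: x)
  case 0
  show ?case by simp
next
  case (Suc j)
  have "p ((p ^^ j) x) \<le> q ((p ^^ j) x)" using assms(1) by blast
  also have "\<dots> \<le> q ((q ^^ j) x)" using Suc assms(2) by (simp add: monoD)
  finally show ?case by simp
qed

lemma funpow_comp_Suc: "(f \<circ> g) ^^ Suc j = f \<circ> (g \<circ> f) ^^ j \<circ> g"
proof (induction j)
  case (Suc j)
  have "(f \<circ> g) ^^ Suc (Suc j) = (f \<circ> g) \<circ> (f \<circ> (g \<circ> f) ^^ j \<circ> g)"
    by (subst funpow.simps(2)) (simp only: Suc.IH)
  also have "\<dots> = f \<circ> ((g \<circ> f) \<circ> (g \<circ> f) ^^ j) \<circ> g" by (simp only: comp_assoc)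
  also have "\<dots> = f \<circ> (g \<circ> f) ^^ Suc j \<circ> g" by (simp only: funpow.simps(2))
  finally show ?case .
qed simp

lemma funpow_alternating_le:
  fixes g Y :: "'a::order \<Rightarrow> 'a"
  assumes gY: "\<forall>x. g x \<le> Y x" and g: "mono g" and Y: "mono Y"
  shows "((g ^^ p \<circ> Y ^^ b) ^^ Suc m) ((g ^^ q) t) \<le> (g ^^ p) ((Y ^^ ((p + b) * m + b + q)) t)"
proof -
  have Yj: "mono (Y ^^ j)" for j using Y by (simp add: monoI funpow_mono)
  have gjY: "(g ^^ j) x \<le> (Y ^^ j) x" for j x using gY Y by (rule funpow_le_funpow)
  have "Y ^^ (p + b) = Y ^^ b \<circ> Y ^^ p" by (metis add.commute funpow_add)
  then have "(Y ^^ b \<circ> g ^^ p) x \<le> (Y ^^ (p + b)) x" for x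
    using gjY Yj by (simp add: monoD)
  then have blocks: "((Y ^^ b \<circ> g ^^ p) ^^ m) x \<le> (Y ^^ ((p + b) * m)) x" for x
    using funpow_le_funpow[OF _ Yj] by (metis funpow_mult mult.commute)
  have head: "(Y ^^ b) ((g ^^ q) t) \<le> (Y ^^ (b + q)) t"
    using gjY Yj by (simp add: monoD funpow_add)
  have "((Y ^^ b \<circ> g ^^ p) ^^ m) ((Y ^^ b) ((g ^^ q) t)) \<le> (Y ^^ ((p + b) * m)) ((Y ^^ (b + q)) t)"
    using blocks head Yj by (meson monoD order_trans)
  also have "\<dots> = (Y ^^ ((p + b) * m + b + q)) t"
    by (simp add: funpow_add add.assoc)
  finally show ?thesis
    unfolding funpow_comp_Suc using funpow_mono[OF g] by simp
qed

locale homeo_action = group Q for Q :: "('g, 'x) monoid_scheme" (structure) +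
  fixes \<Phi> :: "'g \<Rightarrow> real \<Rightarrow> real"
  assumes hom: "\<Phi> \<in> hom Q homeo_plus"
begin

lemma strict_mono: "u \<in> carrier Q \<Longrightarrow> strict_mono (\<Phi> u)"
  using hom by (auto simp: hom_def homeo_plus_def)

lemma surj:
  assumes "u \<in> carrier Q" shows "surj (\<Phi> u)"
proof -
  have "\<Phi> u \<in> carrier homeo_plus" using hom assms by (auto simp: hom_def)
  then obtain h where "homeomorphism UNIV UNIV (\<Phi> u) h" by (auto simp: homeo_plus_def)
  then show ?thesis by (simp add: homeomorphism_def)
qed

lemma mult: "u \<in> carrier Q \<Longrightarrow> v \<in> carrier Q \<Longrightarrow> \<Phi> (u \<otimes> v) = \<Phi> u \<circ> \<Phi> v"
  using hom by (auto simp: hom_def homeo_plus_def)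

lemma one: "\<Phi> \<one> = id"
proof
  fix t
  have "\<Phi> \<one> (\<Phi> \<one> t) = \<Phi> \<one> t" using mult[of \<one> \<one>] by (metis comp_apply l_one one_closed)
  then show "\<Phi> \<one> t = id t" using strict_mono[of \<one>] by (simp add: strict_mono_eq)
qed

lemma nat_pow: "\<Phi> (u [^] (j::nat)) = \<Phi> u ^^ j" if "u \<in> carrier Q"
  by (induction j) (simp_all add: one mult funpow_Suc_right that del: funpow.simps)

lemma mono: "u \<in> carrier Q \<Longrightarrow> mono (\<Phi> u)"
  using strict_mono strict_mono_mono by blast

lemma le_apply_of_relation:
  fixes p b m :: nat
  assumes a: "a \<in> carrier Q" and c: "c \<in> carrier Q" and "1 \<le> p" and "1 \<le> b"
    and rel: "((a \<otimes> (c [^] p \<otimes> (a \<otimes> c) \<otimes> inv (c [^] p))) [^] (p + b - 1)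
                 \<otimes> inv (c [^] p \<otimes> (a \<otimes> c) [^] (b - 1))) [^] Suc m
              = a \<otimes> (c [^] p \<otimes> (a \<otimes> c) \<otimes> inv (c [^] p))"
    and a_ge: "\<forall>t. t \<le> \<Phi> a t"
  shows "s \<le> \<Phi> c s"
proof -
  define y where "y = a \<otimes> c"
  define V where "V = c [^] p \<otimes> y \<otimes> inv (c [^] p)"
  define w where "w = a \<otimes> V"
  define N where "N = (p + (b - 1)) * m + (b - 1) + (p - 1)"
  define g where "g = \<Phi> c"
  define Y where "Y = \<Phi> y"
  have car: "y \<in> carrier Q" "c [^] p \<in> carrier Q" "V \<in> carrier Q" "w \<in> carrier Q"
    using a c by (simp_all add: y_def V_def w_def)
  have "w [^] (Suc m * (p + b - 1) - 1) = (c [^] p \<otimes> y [^] (b - 1)) [^] Suc m"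
    by (rule pow_eq_pow_of_relation[OF car(4) _ _ rel[folded y_def, folded V_def, folded w_def]])
      (use car c \<open>1 \<le> p\<close> \<open>1 \<le> b\<close> in auto)
  moreover have "Suc m * (p + b - 1) - 1 = N" using \<open>1 \<le> p\<close> \<open>1 \<le> b\<close>
    by (cases p; cases b) (simp_all add: N_def algebra_simps)
  ultimately have "\<Phi> (w [^] N) = \<Phi> ((c [^] p \<otimes> y [^] (b - 1)) [^] Suc m)" by simp
  then have P: "\<Phi> w ^^ N = (g ^^ p \<circ> Y ^^ (b - 1)) ^^ Suc m"
    using car c by (simp add: nat_pow mult g_def Y_def funpow_Suc_right del: nat_pow_Suc funpow.simps)
  have "\<Phi> (V [^] N \<otimes> c [^] p) = \<Phi> (c [^] p \<otimes> y [^] N)"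
    using conj_nat_pow_mult[OF car(2,1)] by (simp add: V_def)
  then have conj: "\<Phi> V ^^ N \<circ> g ^^ p = g ^^ p \<circ> Y ^^ N"
    using car c by (simp add: mult nat_pow g_def Y_def)
  have "\<forall>x. g x \<le> Y x" and "\<forall>x. \<Phi> V x \<le> \<Phi> w x"
    using a_ge a c car by (simp_all add: Y_def y_def w_def mult g_def)
  obtain t where t: "(g ^^ (p - 1)) t = s"
    using surj[of "c [^] (p - 1)"] c by (metis g_def nat_pow nat_pow_closed surjD)
  have "(\<Phi> w ^^ N) s \<le> (g ^^ p) ((Y ^^ N) t)"
    using funpow_alternating_le[OF \<open>\<forall>x. g x \<le> Y x\<close> mono[OF c, folded g_def]
        mono[OF car(1), folded Y_def], where p = p and b = "b - 1" and m = m and q = "p - 1" and t = t]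
    unfolding P[symmetric] N_def[symmetric] t .
  also have "\<dots> = (\<Phi> V ^^ N) ((g ^^ p) t)" using conj by (metis comp_apply)
  also have "\<dots> \<le> (\<Phi> w ^^ N) ((g ^^ p) t)"
    using funpow_le_funpow[OF \<open>\<forall>x. \<Phi> V x \<le> \<Phi> w x\<close> mono[OF car(4)]] .
  also have "\<dots> = (\<Phi> w ^^ N) (g s)"
    using t \<open>1 \<le> p\<close> by (metis Suc_diff_1 funpow.simps(2) funpow_swap1 less_le_trans zero_less_one comp_apply)
  finally show "s \<le> g s"
    using strict_mono[of "w [^] N"] car by (simp add: nat_pow strict_mono_less_eq)
qed

end

theorem mainTheorem11:
  fixes Q :: "('g, 'x) monoid_scheme" (structure)
    and n m k b e :: nat and \<alpha> \<beta> :: 'g and \<Phi> :: "'g \<Rightarrow> real \<Rightarrow> real"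
  assumes "n \<ge> 2" and "1 \<le> k" and "k \<le> n - 1"
    and "(b, e) = (2*k, n+k) \<or> (b, e) = (2*k - 1, n+k-1)"
    and "group Q" and "\<alpha> \<in> carrier Q" and "\<beta> \<in> carrier Q"
    and "generate Q {\<alpha>, \<beta>} = carrier Q"
    and "knot_rel Q n k m b e \<alpha> \<beta>"
    and "\<Phi> \<in> hom Q homeo_plus"
    and "\<forall>t. \<Phi> \<alpha> t > t"
  shows "\<forall>t. \<Phi> \<beta> t \<ge> t"
proof
  fix s
  interpret homeo_action Q \<Phi> using assms(5,10) by (simp add: homeo_action_def homeo_action_axioms_def)
  have "k \<le> n" "1 \<le> n + 1 - k" "1 \<le> b" and e: "e = (n + 1 - k) + b - 1"
    using assms(1-4) by auto
  have "\<forall>t. t \<le> \<Phi> \<alpha> t" using assms(11) by (simp add: less_imp_le)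
  with knot_rel_conv[OF assms(6,7) \<open>k \<le> n\<close> \<open>1 \<le> b\<close>, THEN iffD1, OF assms(9)]
  show "s \<le> \<Phi> \<beta> s"
    by (rule le_apply_of_relation[OF assms(6,7) \<open>1 \<le> n + 1 - k\<close> \<open>1 \<le> b\<close>, unfolded e[symmetric]])
qed

end
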